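(* Let $G$ be a graph on $n$ vertices and let $SV=(v_1,\dots,v_n)$ be a permutation of $V(G)$. Then there exist sets $VC_1,\dots,VC_{n-1}$ such that each $VC_i$ is a minimum-cardinality vertex cover of $G_i$ ($1\le i<n$) and, for each $1 \leq i < n-1$, $VC_i \cap (V(G)\setminus V_{i+1}) \subseteq VC_{i+1}$.
   Context: For $1\le i\le n$, $V_i=\{v_1,\dots,v_i\}$, and $G_i$ is the graph with vertex set $V(G)$ whose edges are exactly the edges of $G$ having one end in $V_i$ and the other in $V(G)\setminus V_i$. A vertex cover of a graph is a set of vertices incident to all its edges. *)

theory Defs
  imports Main
begin

definition simple_graph :: "'a set \<Rightarrow> 'a set set \<Rightarrow> bool" where
  "simple_graph V E \<longleftrightarrow> finite V \<and> (\<forall>e\<in>E. e \<subseteq> V \<and> card e = 2)"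

(* V_i = {v_1, ..., v_i} for the ordering vs = [v_1, ..., v_n] *)
definition prefix_set :: "'a list \<Rightarrow> nat \<Rightarrow> 'a set" where
  "prefix_set vs i = set (take i vs)"

(* Edge set of G_i: edges of G with one end in V_i and the other in V(G) - V_i *)
definition cut_edges :: "'a set \<Rightarrow> 'a set set \<Rightarrow> 'a list \<Rightarrow> nat \<Rightarrow> 'a set set" where
  "cut_edges V E vs i =
     {e \<in> E. \<exists>x y. e = {x, y} \<and> x \<in> prefix_set vs i \<and> y \<in> V - prefix_set vs i}"

definition vertex_cover :: "'a set \<Rightarrow> 'a set set \<Rightarrow> 'a set \<Rightarrow> bool" where
  "vertex_cover V F C \<longleftrightarrow> C \<subseteq> V \<and> (\<forall>e\<in>F. e \<inter> C \<noteq> {})"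

definition min_vertex_cover :: "'a set \<Rightarrow> 'a set set \<Rightarrow> 'a set \<Rightarrow> bool" where
  "min_vertex_cover V F C \<longleftrightarrow> vertex_cover V F C \<and>
     (\<forall>C'. vertex_cover V F C' \<longrightarrow> card C \<le> card C')"

end

theory Submission
  imports Defs
begin

text \<open>
  Uncrossing: let \<open>A \<subseteq> B\<close> and let \<open>C\<close>, \<open>D\<close> be minimum covers of the cuts of \<open>A\<close> and \<open>B\<close>.
  Taking \<open>C \<union> D\<close> outside \<open>B\<close>, \<open>C \<inter> D\<close> inside \<open>A\<close> and \<open>D\<close> on \<open>B - A\<close> gives a cover of the
  cut of \<open>B\<close>; the complementary choice (\<open>C \<inter> D\<close>, \<open>C \<union> D\<close>, \<open>C\<close>) gives a cover of the cut
  of \<open>A\<close>. Together they have the size of \<open>C\<close> and \<open>D\<close>, so both are minimum, and the first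
  contains \<open>C - B\<close>. Applying this along \<open>V\<^sub>0 \<subseteq> V\<^sub>1 \<subseteq> \<dots>\<close> builds the whole sequence; only
  finiteness of \<open>V\<close> and nestedness of the prefixes are needed.
\<close>

definition edge_cut :: "'a set \<Rightarrow> 'a set set \<Rightarrow> 'a set \<Rightarrow> 'a set set" where
  "edge_cut V E A = {e \<in> E. \<exists>x y. e = {x, y} \<and> x \<in> A \<and> y \<in> V - A}"

lemma cut_edges_eq_edge_cut: "cut_edges V E vs i = edge_cut V E (prefix_set vs i)"
  by (simp add: cut_edges_def edge_cut_def)

lemma edge_cut_memI: "e \<in> E \<Longrightarrow> e = {x, y} \<Longrightarrow> x \<in> A \<Longrightarrow> y \<in> V - A \<Longrightarrow> e \<in> edge_cut V E A"
  unfolding edge_cut_def by blast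

lemma prefix_set_mono: "prefix_set vs i \<subseteq> prefix_set vs (Suc i)"
  unfolding prefix_set_def by (simp add: set_take_subset_set_take)

lemma vertex_cover_subset: "vertex_cover V F C \<Longrightarrow> C \<subseteq> V"
  unfolding vertex_cover_def by blast

lemma vertex_cover_edge: "vertex_cover V F C \<Longrightarrow> {x, y} \<in> F \<Longrightarrow> x \<in> C \<or> y \<in> C"
  unfolding vertex_cover_def by auto

lemma vertex_cover_edge_cut_self: "vertex_cover V (edge_cut V E A) V"
  unfolding vertex_cover_def edge_cut_def by blast

lemma ex_min_vertex_cover:
  assumes "vertex_cover V F C"
  shows "\<exists>D. min_vertex_cover V F D"
  using ex_has_least_nat[of "vertex_cover V F" C card, OF assms]
  unfolding min_vertex_cover_def by blast

lemma min_vertex_cover_of_le: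
  assumes "min_vertex_cover V F C" "vertex_cover V F C'" "card C' \<le> card C"
  shows "min_vertex_cover V F C'"
  using assms unfolding min_vertex_cover_def by (meson le_trans)

lemma card_split_nested:
  assumes "finite X" "A \<subseteq> B"
  shows "card X = card (X - B) + card (X \<inter> A) + card (X \<inter> (B - A))"
proof -
  have "card X = card (X \<inter> B) + card (X - B)"
    using card_Int_Diff[OF assms(1)] .
  moreover have "card (X \<inter> B) = card (X \<inter> B \<inter> A) + card (X \<inter> B - A)"
    using card_Int_Diff assms(1) by blast
  moreover have "X \<inter> B \<inter> A = X \<inter> A" "X \<inter> B - A = X \<inter> (B - A)"
    using assms(2) by auto
  ultimately show ?thesis by simp
qed

lemma card_uncross:
  assumes "finite C" "finite D" "A \<subseteq> B"
  shows "card ((C \<union> D) - B \<union> (C \<inter> D \<inter> A) \<union> (D \<inter> (B - A)))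
           + card ((C \<inter> D) - B \<union> ((C \<union> D) \<inter> A) \<union> (C \<inter> (B - A)))
         = card C + card D"
    (is "card ?D' + card ?C' = _")
proof -
  have fin: "finite ?D'" "finite ?C'"
    using assms(1,2) by auto
  have D': "?D' - B = (C \<union> D) - B" "?D' \<inter> A = C \<inter> D \<inter> A" "?D' \<inter> (B - A) = D \<inter> (B - A)"
    using assms(3) by auto
  have C': "?C' - B = (C \<inter> D) - B" "?C' \<inter> A = (C \<union> D) \<inter> A" "?C' \<inter> (B - A) = C \<inter> (B - A)"
    using assms(3) by auto
  have outside: "card ((C \<union> D) - B) + card ((C \<inter> D) - B) = card (C - B) + card (D - B)"
  proof -
    have "(C - B) \<union> (D - B) = (C \<union> D) - B" "(C - B) \<inter> (D - B) = (C \<inter> D) - B"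
      by auto
    then show ?thesis
      using card_Un_Int[of "C - B" "D - B"] assms(1,2) by simp
  qed
  have inside: "card ((C \<union> D) \<inter> A) + card (C \<inter> D \<inter> A) = card (C \<inter> A) + card (D \<inter> A)"
  proof -
    have "(C \<inter> A) \<union> (D \<inter> A) = (C \<union> D) \<inter> A" "(C \<inter> A) \<inter> (D \<inter> A) = C \<inter> D \<inter> A"
      by auto
    then show ?thesis
      using card_Un_Int[of "C \<inter> A" "D \<inter> A"] assms(1,2) by simp
  qed
  show ?thesis
    using card_split_nested[OF fin(1) assms(3)] card_split_nested[OF fin(2) assms(3)]
      card_split_nested[OF assms(1,3)] card_split_nested[OF assms(2,3)] D' C' outside inside
    by simp
qed

lemma vertex_cover_uncross_outer:
  assumes "A \<subseteq> B"
    and C: "vertex_cover V (edge_cut V E A) C" and D: "vertex_cover V (edge_cut V E B) D"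
  shows "vertex_cover V (edge_cut V E B) ((C \<union> D) - B \<union> (C \<inter> D \<inter> A) \<union> (D \<inter> (B - A)))"
    (is "vertex_cover _ _ ?D'")
  unfolding vertex_cover_def
proof (intro conjI ballI)
  show "?D' \<subseteq> V"
    using vertex_cover_subset[OF C] vertex_cover_subset[OF D] by blast
next
  fix e assume e: "e \<in> edge_cut V E B"
  then obtain x y where xy: "e \<in> E" "e = {x, y}" "x \<in> B" "y \<in> V - B"
    unfolding edge_cut_def by blast
  have "x \<in> D \<or> y \<in> D"
    using vertex_cover_edge[OF D] e xy(2) by blast
  moreover have "x \<in> C \<or> y \<in> C" if "x \<in> A"
  proof -
    have "e \<in> edge_cut V E A"
      using xy that assms(1) by (intro edge_cut_memI[where x = x and y = y]) auto
    then show ?thesis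
      using vertex_cover_edge[OF C] xy(2) by blast
  qed
  ultimately have "x \<in> ?D' \<or> y \<in> ?D'"
    using xy(3,4) by blast
  then show "e \<inter> ?D' \<noteq> {}"
    using xy(2) by blast
qed

lemma vertex_cover_uncross_inner:
  assumes "A \<subseteq> B"
    and C: "vertex_cover V (edge_cut V E A) C" and D: "vertex_cover V (edge_cut V E B) D"
  shows "vertex_cover V (edge_cut V E A) ((C \<inter> D) - B \<union> ((C \<union> D) \<inter> A) \<union> (C \<inter> (B - A)))"
    (is "vertex_cover _ _ ?C'")
  unfolding vertex_cover_def
proof (intro conjI ballI)
  show "?C' \<subseteq> V"
    using vertex_cover_subset[OF C] vertex_cover_subset[OF D] by blast
next
  fix e assume e: "e \<in> edge_cut V E A"
  then obtain x y where xy: "e \<in> E" "e = {x, y}" "x \<in> A" "y \<in> V - A"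
    unfolding edge_cut_def by blast
  have "x \<in> C \<or> y \<in> C"
    using vertex_cover_edge[OF C] e xy(2) by blast
  moreover have "x \<in> D \<or> y \<in> D" if "y \<notin> B"
  proof -
    have "e \<in> edge_cut V E B"
      using xy that assms(1) by (intro edge_cut_memI[where x = x and y = y]) auto
    then show ?thesis
      using vertex_cover_edge[OF D] xy(2) by blast
  qed
  ultimately have "x \<in> ?C' \<or> y \<in> ?C'"
    using xy(3,4) assms(1) by blast
  then show "e \<inter> ?C' \<noteq> {}"
    using xy(2) by blast
qed

lemma ex_min_vertex_cover_extending:
  assumes "finite V" "A \<subseteq> B" and C: "min_vertex_cover V (edge_cut V E A) C"
  shows "\<exists>D. min_vertex_cover V (edge_cut V E B) D \<and> C - B \<subseteq> D"
proof -
  obtain D where D: "min_vertex_cover V (edge_cut V E B) D"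
    using ex_min_vertex_cover[OF vertex_cover_edge_cut_self] by blast
  let ?D' = "(C \<union> D) - B \<union> (C \<inter> D \<inter> A) \<union> (D \<inter> (B - A))"
  let ?C' = "(C \<inter> D) - B \<union> ((C \<union> D) \<inter> A) \<union> (C \<inter> (B - A))"
  have covC: "vertex_cover V (edge_cut V E A) C" and covD: "vertex_cover V (edge_cut V E B) D"
    using C D unfolding min_vertex_cover_def by blast+
  have D': "vertex_cover V (edge_cut V E B) ?D'"
    using vertex_cover_uncross_outer[OF assms(2) covC covD] .
  have C': "vertex_cover V (edge_cut V E A) ?C'"
    using vertex_cover_uncross_inner[OF assms(2) covC covD] .
  have "card ?D' + card ?C' = card C + card D"
    using card_uncross[OF _ _ assms(2)] vertex_cover_subset[OF covC] vertex_cover_subset[OF covD]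
      assms(1) by (meson finite_subset)
  moreover have "card C \<le> card ?C'" "card D \<le> card ?D'"
    using C D C' D' unfolding min_vertex_cover_def by blast+
  ultimately have "card ?D' \<le> card D"
    by linarith
  then have "min_vertex_cover V (edge_cut V E B) ?D'"
    using min_vertex_cover_of_le[OF D D'] by blast
  then show ?thesis
    by blast
qed

theorem lemma4:
  fixes V :: "'a set" and E :: "'a set set" and vs :: "'a list" and n :: nat
  assumes "simple_graph V E"
    and "card V = n"
    and "distinct vs" and "set vs = V"
  shows "\<exists>VC :: nat \<Rightarrow> 'a set.
           (\<forall>i. 1 \<le> i \<and> i < n \<longrightarrow> min_vertex_cover V (cut_edges V E vs i) (VC i)) \<and>
           (\<forall>i. 1 \<le> i \<and> i < n - 1 \<longrightarrow>
              VC i \<inter> (V - prefix_set vs (Suc i)) \<subseteq> VC (Suc i))"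
proof -
  have "finite V"
    using assms(1) unfolding simple_graph_def by blast
  have "\<exists>VC. \<forall>i. min_vertex_cover V (cut_edges V E vs i) (VC i) \<and>
                 VC i \<inter> (V - prefix_set vs (Suc i)) \<subseteq> VC (Suc i)"
  proof (rule dependent_nat_choice)
    show "\<exists>C. min_vertex_cover V (cut_edges V E vs 0) C"
      using ex_min_vertex_cover[OF vertex_cover_edge_cut_self]
      by (simp add: cut_edges_eq_edge_cut)
  next
    fix C i
    assume C: "min_vertex_cover V (cut_edges V E vs i) C"
    then have "min_vertex_cover V (edge_cut V E (prefix_set vs i)) C"
      by (simp add: cut_edges_eq_edge_cut)
    from ex_min_vertex_cover_extending[OF \<open>finite V\<close> prefix_set_mono this]
    obtain D where "min_vertex_cover V (cut_edges V E vs (Suc i)) D"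
      and "C - prefix_set vs (Suc i) \<subseteq> D"
      by (auto simp: cut_edges_eq_edge_cut)
    moreover have "C \<subseteq> V"
      using C vertex_cover_subset unfolding min_vertex_cover_def by blast
    ultimately show "\<exists>D. min_vertex_cover V (cut_edges V E vs (Suc i)) D \<and>
                   C \<inter> (V - prefix_set vs (Suc i)) \<subseteq> D"
      by blast
  qed
  then show ?thesis
    by blast
qed

end
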